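(* Let $m>n$ be coprime positive integers, $\lambda\in X$, $\Lambda=x(\lambda)$ and $\alpha=\epsilon_i-\delta_j$ ($i\in[n]$, $j\in[m]$). If $\Lambda\in\Pi_\alpha$, then either $\lambda\in X_\alpha$, or $(m,1^{n-1})\subseteq\lambda$ (i.e. $\lambda_1=m$ and $\lambda_n\ge1$) and $\alpha=\epsilon_n-\delta_1$.
   Context: $X$ is the set of partitions $\lambda=(\lambda_1\ge\dots\ge\lambda_n\ge0)$ with $\lambda_1\le m$, drawn in an $n\times m$ rectangle with rows $\epsilon_1,\dots,\epsilon_n$ top to bottom and columns $\delta_1,\dots,\delta_m$; the diagram consists of boxes $\epsilon_i-\delta_j$ with $j\le\lambda_{n+1-i}$; $\lambda'_j=\#\{i:\lambda_i\ge j\}$. $X_\alpha$ is the set of $\lambda$ for which the box $\alpha$ is an outer corner (not in $\lambda$, and adding it gives an element of $X$). $x(\lambda)=(a_1,\dots,a_n|b_1,\dots,b_m)$ with $a_i=m(n-i)+n\lambda_{n+1-i}$, $b_j=n(j-1)+m\lambda'_j$. $\Pi_\alpha=\{\Lambda: a_i=b_j\}$. *)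

theory Defs
  imports Main
begin

text \<open>A partition lambda = (lambda_1 >= ... >= lambda_n >= 0) with lambda_1 <= m is
  represented by a function nat => nat whose values at 1..n are the parts
  (and which is 0 outside 1..n, for canonicity).\<close>
definition partX :: "nat \<Rightarrow> nat \<Rightarrow> (nat \<Rightarrow> nat) set" where
  "partX n m = {lam. (\<forall>i. 1 \<le> i \<and> i < n \<longrightarrow> lam (Suc i) \<le> lam i)
                    \<and> (\<forall>i\<in>{1..n}. lam i \<le> m)
                    \<and> (\<forall>i. i \<notin> {1..n} \<longrightarrow> lam i = 0)}"

definition conj_part :: "nat \<Rightarrow> (nat \<Rightarrow> nat) \<Rightarrow> nat \<Rightarrow> nat" where
  "conj_part n lam j = card {i \<in> {1..n}. lam i \<ge> j}"

text \<open>Young diagram in the n x m rectangle: box (i,j) stands for epsilon_i - delta_j;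
  row i (top to bottom) contains the boxes j <= lambda_{n+1-i}.\<close>
definition diagram :: "nat \<Rightarrow> nat \<Rightarrow> (nat \<Rightarrow> nat) \<Rightarrow> (nat \<times> nat) set" where
  "diagram n m lam = {(i, j). i \<in> {1..n} \<and> j \<in> {1..m} \<and> j \<le> lam (n + 1 - i)}"

text \<open>X_alpha: partitions for which box alpha is an outer corner (not in lambda,
  and adding it gives the diagram of an element of X).\<close>
definition outer_corner_set :: "nat \<Rightarrow> nat \<Rightarrow> nat \<times> nat \<Rightarrow> (nat \<Rightarrow> nat) set" where
  "outer_corner_set n m \<alpha> = {lam \<in> partX n m. \<alpha> \<notin> diagram n m lam \<and>
      (\<exists>mu \<in> partX n m. diagram n m mu = insert \<alpha> (diagram n m lam))}"

definition coord_a :: "nat \<Rightarrow> nat \<Rightarrow> (nat \<Rightarrow> nat) \<Rightarrow> nat \<Rightarrow> nat" where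
  "coord_a n m lam i = m * (n - i) + n * lam (n + 1 - i)"

definition coord_b :: "nat \<Rightarrow> nat \<Rightarrow> (nat \<Rightarrow> nat) \<Rightarrow> nat \<Rightarrow> nat" where
  "coord_b n m lam j = n * (j - 1) + m * conj_part n lam j"

text \<open>x(lambda) lies in Pi_alpha for alpha = epsilon_i - delta_j iff a_i = b_j.\<close>
definition in_Pi :: "nat \<Rightarrow> nat \<Rightarrow> (nat \<Rightarrow> nat) \<Rightarrow> nat \<times> nat \<Rightarrow> bool" where
  "in_Pi n m lam \<alpha> \<longleftrightarrow> coord_a n m lam (fst \<alpha>) = coord_b n m lam (snd \<alpha>)"

end

theory Submission
  imports Defs
begin

text \<open>With \<open>r = n + 1 - i\<close> the row of \<open>\<lambda>\<close> meeting \<open>\<alpha>\<close>, the condition \<open>a\<^sub>i = b\<^sub>j\<close> reads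
  \<open>m ((r - 1) - \<lambda>'\<^sub>j) = n ((j - 1) - \<lambda>\<^sub>r)\<close>. The brackets lie in \<open>[-n, n)\<close> and \<open>[-m, m)\<close>,
  so coprimality forces either both to vanish, which says exactly that the box \<open>\<alpha>\<close> is an
  addable corner, or both to take their extreme values \<open>-n\<close> and \<open>-m\<close>, which means \<open>r = 1\<close>,
  \<open>j = 1\<close>, \<open>\<lambda>\<^sub>1 = m\<close> and \<open>\<lambda>'\<^sub>1 = n\<close>.\<close>

lemma coprime_mult_eq_small_solutions:
  fixes m n x y :: int
  assumes "coprime m n" "0 < m" "0 < n"
    and "m * x = n * y" "-n \<le> x" "x < n" "-m \<le> y" "y < m"
  shows "(x = 0 \<and> y = 0) \<or> (x = -n \<and> y = -m)"
proof -
  have "n dvd x"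
    using assms(1,4) by (metis coprime_commute coprime_dvd_mult_right_iff dvd_triv_left)
  then obtain k where k: "x = n * k" by blast
  have "n * k < n * 1" "n * (-1) \<le> n * k" using k assms(5,6) by simp_all
  then have "k = 0 \<or> k = -1"
    unfolding mult_less_cancel_left_pos[OF assms(3)] mult_le_cancel_left_pos[OF assms(3)] by auto
  then show ?thesis using k assms(2,3,4) by auto
qed

lemma partX_antimono:
  assumes "lam \<in> partX n m" "1 \<le> a" "a \<le> b" "b \<le> n"
  shows "lam b \<le> lam a"
  using assms(3,4)
proof (induction b rule: dec_induct)
  case (step k)
  then have "lam (Suc k) \<le> lam k" using assms(1,2) by (auto simp: partX_def)
  then show ?case using step by simp
qed simp

lemma conj_part_le: "conj_part n lam j \<le> n"
proof -
  have "card {i \<in> {1..n}. j \<le> lam i} \<le> card {1..n}" by (rule card_mono) auto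
  then show ?thesis by (simp add: conj_part_def)
qed

lemma le_conj_part_iff:
  assumes "lam \<in> partX n m" "k \<in> {1..n}"
  shows "k \<le> conj_part n lam j \<longleftrightarrow> j \<le> lam k"
proof
  assume "j \<le> lam k"
  have "{1..k} \<subseteq> {x \<in> {1..n}. j \<le> lam x}"
  proof
    fix x assume "x \<in> {1..k}"
    then have "lam k \<le> lam x" using partX_antimono[OF assms(1), of x k] assms(2) by simp
    then show "x \<in> {x \<in> {1..n}. j \<le> lam x}" using \<open>x \<in> {1..k}\<close> \<open>j \<le> lam k\<close> assms(2) by simp
  qed
  then have "card {1..k} \<le> conj_part n lam j"
    unfolding conj_part_def by (rule card_mono[rotated]) simp
  then show "k \<le> conj_part n lam j" by simp
next
  assume "k \<le> conj_part n lam j"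
  show "j \<le> lam k"
  proof (rule ccontr)
    assume "\<not> j \<le> lam k"
    have "{x \<in> {1..n}. j \<le> lam x} \<subseteq> {1..k - 1}"
    proof
      fix x assume x: "x \<in> {x \<in> {1..n}. j \<le> lam x}"
      have "\<not> k \<le> x"
        using partX_antimono[OF assms(1), of k x] x \<open>\<not> j \<le> lam k\<close> assms(2) by auto
      then show "x \<in> {1..k - 1}" using x by simp
    qed
    then have "conj_part n lam j \<le> card {1..k - 1}"
      unfolding conj_part_def by (rule card_mono[rotated]) simp
    then show False using \<open>k \<le> conj_part n lam j\<close> assms(2) by auto
  qed
qed

lemma partX_add_box:
  assumes "lam \<in> partX n m" "r \<in> {1..n}" "j \<le> m" "lam r < j"
    and "\<And>k. 1 \<le> k \<Longrightarrow> k < r \<Longrightarrow> j \<le> lam k"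
  shows "lam(r := j) \<in> partX n m"
  unfolding partX_def
proof (intro CollectI conjI allI impI ballI)
  fix k assume k: "1 \<le> k \<and> k < n"
  then have "lam (Suc k) \<le> lam k" using assms(1) by (auto simp: partX_def)
  then show "(lam(r := j)) (Suc k) \<le> (lam(r := j)) k"
    using assms(4) assms(5)[of k] k by auto
qed (use assms in \<open>auto simp: partX_def\<close>)

lemma diagram_add_box:
  assumes "r \<in> {1..n}" "j \<in> {1..m}" "lam r = j - 1"
  shows "diagram n m (lam(r := j)) = insert (n + 1 - r, j) (diagram n m lam)"
proof (intro set_eqI iffI)
  fix p assume "p \<in> diagram n m (lam(r := j))"
  then show "p \<in> insert (n + 1 - r, j) (diagram n m lam)"
    using assms by (cases p) (auto simp: diagram_def split: if_splits)
next
  fix p assume "p \<in> insert (n + 1 - r, j) (diagram n m lam)"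
  then show "p \<in> diagram n m (lam(r := j))"
    using assms by (cases p) (auto simp: diagram_def)
qed

lemma outer_corner_setI:
  assumes "lam \<in> partX n m" "r \<in> {1..n}" "j \<in> {1..m}" "lam r = j - 1"
    and "\<And>k. 1 \<le> k \<Longrightarrow> k < r \<Longrightarrow> j \<le> lam k"
  shows "lam \<in> outer_corner_set n m (n + 1 - r, j)"
proof -
  have "(n + 1 - r, j) \<notin> diagram n m lam"
    using assms(2-4) by (auto simp: diagram_def)
  moreover have "lam(r := j) \<in> partX n m"
    by (rule partX_add_box[OF assms(1,2)]) (use assms(3-5) in auto)
  moreover note diagram_add_box[of r n j m lam, OF assms(2-4)]
  ultimately show ?thesis
    using assms(1) unfolding outer_corner_set_def by blast
qed

theorem lemma4p5:
  fixes n m i j :: nat and lam :: "nat \<Rightarrow> nat"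
  assumes "0 < n" and "n < m" and "coprime m n"
    and "lam \<in> partX n m"
    and "i \<in> {1..n}" and "j \<in> {1..m}"
    and "in_Pi n m lam (i, j)"
  shows "lam \<in> outer_corner_set n m (i, j)
         \<or> (lam 1 = m \<and> lam n \<ge> 1 \<and> (i, j) = (n, 1))"
proof -
  define r where "r = n + 1 - i"
  define L where "L = conj_part n lam j"
  have r: "r \<in> {1..n}" "i = n + 1 - r" using assms(5) by (auto simp: r_def)
  have "m * (r - 1) + n * lam r = n * (j - 1) + m * L"
    using assms(7) by (simp add: in_Pi_def coord_a_def coord_b_def L_def r_def Suc_diff_le)
  then have "int m * (int (r - 1) - int L) = int n * (int (j - 1) - int (lam r))"
    by (simp add: algebra_simps flip: of_nat_mult of_nat_add)
  moreover have bounds: "L \<le> n" "lam r \<le> m"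
    using conj_part_le assms(4) r(1) by (auto simp: L_def partX_def)
  ultimately have "(int (r - 1) - int L = 0 \<and> int (j - 1) - int (lam r) = 0) \<or>
      (int (r - 1) - int L = - int n \<and> int (j - 1) - int (lam r) = - int m)"
    using r(1) assms(2,3,6) by (intro coprime_mult_eq_small_solutions) auto
  then have "(r - 1 = L \<and> lam r = j - 1) \<or> (r = 1 \<and> L = n \<and> j = 1 \<and> lam r = m)"
    using r(1) assms(6) bounds by (elim disjE conjE) auto
  then consider "r - 1 = L" "lam r = j - 1" | "r = 1" "L = n" "j = 1" "lam r = m"
    by blast
  then show ?thesis
  proof cases
    case 1
    have "j \<le> lam k" if "1 \<le> k" "k < r" for k
    proof -
      have "k \<le> L" using that 1 by simp
      then show ?thesis using le_conj_part_iff[OF assms(4), of k j] that r(1) by (simp add: L_def)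
    qed
    then have "lam \<in> outer_corner_set n m (n + 1 - r, j)"
      using outer_corner_setI[OF assms(4) r(1) assms(6)] 1 by blast
    then show ?thesis using r(2) by simp
  next
    case 2
    then show ?thesis
      using le_conj_part_iff[OF assms(4), of n j] assms(1) r(2) by (auto simp: L_def)
  qed
qed

end
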